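(* Let $f:\mathbb{Z}^n\to\mathbb{R}\cup\{+\infty\}$ be M-convex with bounded $\operatorname{dom} f$, and $\emptyset\neq R\subsetneq N$. Let $k$ be an integer with $\underline{k}\le k\le\overline{k}-2$, let $x\in M(k)$, and let $i\in R$, $j\in N\setminus R$ minimize $f'(x;i,j)$ over $i\in R$, $j\in N\setminus R$. If $f'(x+\chi_i-\chi_j;i,j)=f'(x;i,j)$, then $f'(x+\chi_i-\chi_j;i,j)\le f'(x+\chi_i-\chi_j;h,\ell)$ for all $h\in R$, $\ell\in N\setminus R$, and $x+2\chi_i-2\chi_j\in M(k+2)$.
   Context: $N=\{1,\dots,n\}$; $\chi_i\in\{0,1\}^n$ is the $i$-th unit vector; $x(R)=\sum_{i\in R}x(i)$. For $f:\mathbb{Z}^n\to\mathbb{R}\cup\{+\infty\}$, $\operatorname{dom} f=\{x\in\mathbb{Z}^n: f(x)<+\infty\}$. $f$ is M-convex if $\operatorname{dom} f\neq\emptyset$ and for all $x,y\in\operatorname{dom} f$ and every $i$ with $x(i)>y(i)$ there is $j$ with $x(j)<y(j)$ such that $f(x)+f(y)\ge f(x-\chi_i+\chi_j)+f(y+\chi_i-\chi_j)$. $f'(x;i,j)=f(x+\chi_i-\chi_j)-f(x)$ (possibly $+\infty$). $\underline{k}=\min\{x(R):x\in\operatorname{dom} f\}$, $\overline{k}=\max\{x(R):x\in\operatorname{dom} f\}$; for $\underline{k}\le k\le\overline{k}$, $z(k)=\min\{f(x): x(R)=k,\ x\in\operatorname{dom} f\}$ and $M(k)=\{x\in\operatorname{dom}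 f: x(R)=k,\ f(x)=z(k)\}$. *)

theory Defs
  imports Complex_Main "HOL-Library.Extended_Real" "HOL-Library.Function_Algebras"
begin

text \<open>Ground set N is the finite type 'a; points of Z^N are functions 'a \<Rightarrow> int;
  functions take values in ereal (we additionally require the value -\<infinity> never occurs).\<close>

definition unitv :: "'a \<Rightarrow> 'a \<Rightarrow> int" where
  "unitv i = (\<lambda>j. if j = i then 1 else 0)"

definition effdom :: "(('a \<Rightarrow> int) \<Rightarrow> ereal) \<Rightarrow> ('a \<Rightarrow> int) set" where
  "effdom f = {x. f x < \<infinity>}"

definition M_convex :: "(('a \<Rightarrow> int) \<Rightarrow> ereal) \<Rightarrow> bool" where
  "M_convex f \<longleftrightarrow> effdom f \<noteq> {} \<and>
     (\<forall>x\<in>effdom f. \<forall>y\<in>effdom f. \<forall>i. x i > y i \<longrightarrow>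
        (\<exists>j. x j < y j \<and>
             f x + f y \<ge> f (x - unitv i + unitv j) + f (y + unitv i - unitv j)))"

definition dirder :: "(('a \<Rightarrow> int) \<Rightarrow> ereal) \<Rightarrow> ('a \<Rightarrow> int) \<Rightarrow> 'a \<Rightarrow> 'a \<Rightarrow> ereal" where
  "dirder f x i j = f (x + unitv i - unitv j) - f x"

definition klow :: "(('a \<Rightarrow> int) \<Rightarrow> ereal) \<Rightarrow> 'a set \<Rightarrow> int" where
  "klow f R = Min ((\<lambda>x. sum x R) ` effdom f)"

definition kupp :: "(('a \<Rightarrow> int) \<Rightarrow> ereal) \<Rightarrow> 'a set \<Rightarrow> int" where
  "kupp f R = Max ((\<lambda>x. sum x R) ` effdom f)"

definition zval :: "(('a \<Rightarrow> int) \<Rightarrow> ereal) \<Rightarrow> 'a set \<Rightarrow> int \<Rightarrow> ereal" where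
  "zval f R k = Inf (f ` {x\<in>effdom f. sum x R = k})"

definition Mset :: "(('a \<Rightarrow> int) \<Rightarrow> ereal) \<Rightarrow> 'a set \<Rightarrow> int \<Rightarrow> ('a \<Rightarrow> int) set" where
  "Mset f R k = {x\<in>effdom f. sum x R = k \<and> f x = zval f R k}"

end

theory Submission
  imports Defs
begin

text \<open>Write \<open>x(R) = sum x R\<close> for the level of \<open>x\<close>. Let \<open>x\<close> minimise \<open>f\<close> on level \<open>k\<close>. The exchange
  axiom, applied to \<open>x\<close> and a point \<open>v\<close> of a higher level and iterated as long as it
  only moves mass inside \<open>R\<close> (which by minimality of \<open>x\<close> never increases \<open>f v\<close>), yields
  \<open>h \<in> R\<close>, \<open>l \<notin> R\<close> and a point \<open>v'\<close> one level below \<open>v\<close> with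
  \<open>f (x + \<chi>\<^sub>h - \<chi>\<^sub>l) + f v' \<le> f x + f v\<close>.
  For \<open>v\<close> on level \<open>k + 1\<close> this shows that the best neighbour \<open>y = x + \<chi>\<^sub>i - \<chi>\<^sub>j\<close> of \<open>x\<close>
  minimises level \<open>k + 1\<close>; for \<open>v\<close> on level \<open>k + 2\<close> it gives the discrete convexity
  \<open>2 f y \<le> f x + f v\<close>, i.e. \<open>z(k+1) - z(k) \<le> z(k+2) - z(k+1)\<close>. If the step from \<open>y\<close> in the
  same direction has the same increment, \<open>y + \<chi>\<^sub>i - \<chi>\<^sub>j\<close> attains this lower bound for
  \<open>z(k+2)\<close>, so it lies in \<open>M(k+2)\<close> and in particular is a best neighbour of \<open>y\<close>.\<close>

lemma sum_add_unitv_diff_unitv: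
  fixes x :: "'a::finite \<Rightarrow> int"
  shows "sum (x + unitv h - unitv l) R = sum x R + of_bool (h \<in> R) - of_bool (l \<in> R)"
proof -
  have "sum (x + unitv h - unitv l) R = sum x R + sum (unitv h) R - sum (unitv l) R"
    by (simp add: sum.distrib sum_subtractf)
  then show ?thesis
    by (simp add: unitv_def)
qed

lemma unitv_exchange_commute: "x - unitv h + unitv l = x + unitv l - unitv h"
  by (rule ext) simp

lemma exchange_reduces_distance:
  fixes x v :: "'a::finite \<Rightarrow> int"
  assumes "x h < v h" "v l < x l"
  shows "(\<Sum>a\<in>UNIV. nat \<bar>(v - unitv h + unitv l) a - x a\<bar>) < (\<Sum>a\<in>UNIV. nat \<bar>v a - x a\<bar>)"
proof (rule sum_strict_mono_ex1)
  show "\<forall>a\<in>UNIV. nat \<bar>(v - unitv h + unitv l) a - x a\<bar> \<le> nat \<bar>v a - x a\<bar>"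
    using assms by (auto simp: unitv_def)
  show "\<exists>a\<in>UNIV. nat \<bar>(v - unitv h + unitv l) a - x a\<bar> < nat \<bar>v a - x a\<bar>"
    using assms by (intro bexI[of _ h]) (auto simp: unitv_def)
qed simp

lemma M_convexD:
  assumes "M_convex f" "f x < \<infinity>" "f y < \<infinity>" "y i < x i"
  obtains j where "x j < y j"
    "f (x - unitv i + unitv j) + f (y + unitv i - unitv j) \<le> f x + f y"
  using assms unfolding M_convex_def effdom_def by (metis mem_Collect_eq)

lemma finite_effdom_if_bounded:
  fixes f :: "('a::finite \<Rightarrow> int) \<Rightarrow> ereal"
  assumes "\<forall>y\<in>effdom f. \<forall>a. \<bar>y a\<bar> \<le> B"
  shows "finite (effdom f)"
proof (rule finite_subset)
  show "effdom f \<subseteq> {g. \<forall>a. (a \<in> UNIV \<longrightarrow> g a \<in> {-B..B}) \<and> (a \<notin> UNIV \<longrightarrow> g a = 0)}"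
    using assms by (auto simp: abs_le_iff minus_le_iff)
  show "finite {g::'a \<Rightarrow> int. \<forall>a. (a \<in> UNIV \<longrightarrow> g a \<in> {-B..B}) \<and> (a \<notin> UNIV \<longrightarrow> g a = 0)}"
    by (rule finite_set_of_finite_funs) auto
qed

lemma Mset_iff:
  "x \<in> Mset f R k \<longleftrightarrow> f x < \<infinity> \<and> sum x R = k \<and> (\<forall>a. sum a R = k \<longrightarrow> f x \<le> f a)"
proof
  assume x: "x \<in> Mset f R k"
  have "f x \<le> f a" if "sum a R = k" for a
  proof (cases "f a < \<infinity>")
    case True
    with that have "zval f R k \<le> f a"
      unfolding zval_def by (intro INF_lower) (simp add: effdom_def)
    with x show ?thesis by (simp add: Mset_def)
  qed (simp add: less_top)
  moreover have "f x < \<infinity>" "sum x R = k"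
    using x unfolding Mset_def effdom_def by blast+
  ultimately show "f x < \<infinity> \<and> sum x R = k \<and> (\<forall>a. sum a R = k \<longrightarrow> f x \<le> f a)"
    by blast
next
  assume x: "f x < \<infinity> \<and> sum x R = k \<and> (\<forall>a. sum a R = k \<longrightarrow> f x \<le> f a)"
  then have "zval f R k = f x"
    unfolding zval_def by (intro antisym INF_lower INF_greatest) (auto simp: effdom_def)
  with x show "x \<in> Mset f R k"
    by (simp add: Mset_def effdom_def)
qed

lemma ereal_diff_right_le_iff:
  fixes a b c :: ereal
  assumes "\<bar>c\<bar> \<noteq> \<infinity>"
  shows "a - c \<le> b - c \<longleftrightarrow> a \<le> b"
  using assms by (cases a; cases b; cases c) auto

lemma ereal_le_if_equal_increments:
  fixes a b c d :: ereal
  assumes "\<bar>a\<bar> \<noteq> \<infinity>" "\<bar>b\<bar> \<noteq> \<infinity>" "c - b = b - a" "b + b \<le> a + d"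
  shows "c \<le> d"
  using assms by (cases a; cases b; cases c; cases d) auto

lemma exists_coord_less_if_sum_less:
  fixes x v :: "'a \<Rightarrow> int"
  assumes "sum x R < sum v R"
  obtains h where "h \<in> R" "x h < v h"
proof -
  have "\<not> (\<forall>h\<in>R. v h \<le> x h)"
    using assms sum_mono[of R v x] by force
  then show ?thesis
    using that by (meson not_le)
qed

lemma Mset_exchange_to_lower_level:
  fixes f :: "('a::finite \<Rightarrow> int) \<Rightarrow> ereal"
  assumes M: "M_convex f" and noninf: "\<forall>y. f y \<noteq> -\<infinity>" and x: "x \<in> Mset f R k"
    and "f v < \<infinity>" and "k < sum v R"
  obtains h l v' where "h \<in> R" "l \<notin> R" "sum v' R = sum v R - 1"
    "f (x + unitv h - unitv l) + f v' \<le> f x + f v"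
  using assms(4,5)
proof (induction "\<Sum>a\<in>UNIV. nat \<bar>v a - x a\<bar>" arbitrary: v rule: less_induct)
  case less
  have fx: "f x < \<infinity>" "sum x R = k" and xmin: "\<And>a. sum a R = k \<Longrightarrow> f x \<le> f a"
    using x by (simp_all add: Mset_iff)
  obtain h where h: "h \<in> R" "x h < v h"
    using fx(2) less.prems(3) by (auto elim: exists_coord_less_if_sum_less)
  obtain l where l: "v l < x l"
    and exch: "f (v - unitv h + unitv l) + f (x + unitv h - unitv l) \<le> f v + f x"
    using M_convexD[where x = v and y = x and i = h, OF M less.prems(2) fx(1) h(2)] by blast
  show ?thesis
  proof (cases "l \<in> R")
    case False
    have "sum (v - unitv h + unitv l) R = sum v R - 1"
      unfolding unitv_exchange_commute sum_add_unitv_diff_unitv using h(1) False by simp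
    then show ?thesis
      using less.prems(1)[OF h(1) False] exch by (metis add.commute)
  next
    case True
    let ?v = "v - unitv h + unitv l"
    have "f x \<le> f (x + unitv h - unitv l)"
      using h(1) True fx(2) by (intro xmin) (subst sum_add_unitv_diff_unitv, simp)
    then have "f ?v + f x \<le> f v + f x"
      using exch by (meson add_left_mono order_trans)
    then have le: "f ?v \<le> f v"
      using fx(1) noninf by (simp add: ereal_add_le_add_iff2)
    have level: "sum ?v R = sum v R"
      unfolding unitv_exchange_commute sum_add_unitv_diff_unitv using h(1) True by simp
    show ?thesis
    proof (rule less.hyps[OF exchange_reduces_distance[OF h(2) l]])
      fix h' l' v'
      assume "h' \<in> R" "l' \<notin> R" "sum v' R = sum ?v R - 1"
        and "f (x + unitv h' - unitv l') + f v' \<le> f x + f ?v"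
      with level order_trans[OF _ add_left_mono[OF le]] show thesis
        by (intro less.prems(1)) simp_all
    next
      show "f ?v < \<infinity>"
        using le less.prems(2) by order
      show "k < sum ?v R"
        using level less.prems(3) by simp
    qed
  qed
qed

lemma Mset_succ_if_best_neighbour:
  fixes f :: "('a::finite \<Rightarrow> int) \<Rightarrow> ereal"
  assumes M: "M_convex f" and noninf: "\<forall>y. f y \<noteq> -\<infinity>" and x: "x \<in> Mset f R k"
    and i: "i \<in> R" and j: "j \<notin> R"
    and best: "\<forall>h\<in>R. \<forall>l\<in>-R. dirder f x i j \<le> dirder f x h l"
    and higher: "\<exists>v\<in>effdom f. k < sum v R"
  shows "x + unitv i - unitv j \<in> Mset f R (k + 1)"
proof -
  let ?y = "x + unitv i - unitv j"
  have fx: "f x < \<infinity>" "sum x R = k" and xmin: "\<And>a. sum a R = k \<Longrightarrow> f x \<le> f a"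
    using x by (simp_all add: Mset_iff)
  have fx_fin: "\<bar>f x\<bar> \<noteq> \<infinity>"
    using fx(1) noninf by auto
  have y_best: "f ?y \<le> f (x + unitv h - unitv l)" if "h \<in> R" "l \<notin> R" for h l
    using best that fx_fin by (auto simp: dirder_def ereal_diff_right_le_iff)
  have y_min: "f ?y \<le> f a" if a: "sum a R = k + 1" for a
  proof (cases "f a < \<infinity>")
    case True
    then obtain h l v' where "h \<in> R" "l \<notin> R" "sum v' R = k"
      and exch: "f (x + unitv h - unitv l) + f v' \<le> f x + f a"
      using Mset_exchange_to_lower_level[OF M noninf x] a by force
    with xmin have "f (x + unitv h - unitv l) + f x \<le> f a + f x"
      by (metis add.commute add_left_mono order_trans)
    with fx(1) noninf have "f (x + unitv h - unitv l) \<le> f a"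
      by (simp add: ereal_add_le_add_iff2)
    with y_best \<open>h \<in> R\<close> \<open>l \<notin> R\<close> show ?thesis
      by (meson order_trans)
  qed (simp add: less_top)
  have "f ?y < \<infinity>"
  proof -
    obtain v where "f v < \<infinity>" "k < sum v R"
      using higher by (auto simp: effdom_def)
    then obtain h l v' where "h \<in> R" "l \<notin> R"
      and exch: "f (x + unitv h - unitv l) + f v' \<le> f x + f v"
      using Mset_exchange_to_lower_level[OF M noninf x] by metis
    have "f (x + unitv h - unitv l) < \<infinity>"
      using exch fx(1) \<open>f v < \<infinity>\<close> noninf
      by (cases "f (x + unitv h - unitv l)"; cases "f v'"; cases "f x"; cases "f v") auto
    with y_best[OF \<open>h \<in> R\<close> \<open>l \<notin> R\<close>] show ?thesis
      by order
  qed
  moreover have "sum ?y R = k + 1"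
    using i j fx(2) by (subst sum_add_unitv_diff_unitv) simp
  ultimately show ?thesis
    using y_min by (simp add: Mset_iff)
qed

lemma Mset_midpoint_le:
  fixes f :: "('a::finite \<Rightarrow> int) \<Rightarrow> ereal"
  assumes M: "M_convex f" and noninf: "\<forall>y. f y \<noteq> -\<infinity>"
    and x: "x \<in> Mset f R k" and y: "y \<in> Mset f R (k + 1)" and u: "sum u R = k + 2"
  shows "f y + f y \<le> f x + f u"
proof (cases "f u < \<infinity>")
  case True
  then obtain h l v' where "h \<in> R" "l \<notin> R" "sum v' R = k + 1"
    and exch: "f (x + unitv h - unitv l) + f v' \<le> f x + f u"
    using Mset_exchange_to_lower_level[OF M noninf x] u by force
  moreover have "sum (x + unitv h - unitv l) R = k + 1"
    using x \<open>h \<in> R\<close> \<open>l \<notin> R\<close> by (subst sum_add_unitv_diff_unitv) (simp add: Mset_iff)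
  ultimately have "f y + f y \<le> f (x + unitv h - unitv l) + f v'"
    using y by (intro add_mono) (simp_all add: Mset_iff)
  with exch show ?thesis
    by order
next
  case False
  then show ?thesis
    using noninf by (simp add: less_top)
qed

theorem mainTheorem8:
  fixes f :: "('a::finite \<Rightarrow> int) \<Rightarrow> ereal"
    and R :: "'a set" and k :: int and x :: "'a \<Rightarrow> int" and i j :: 'a
  assumes noninf: "\<forall>y. f y \<noteq> -\<infinity>"
    and Mconv: "M_convex f"
    and bdd: "\<exists>B. \<forall>y\<in>effdom f. \<forall>a. \<bar>y a\<bar> \<le> B"
    and Rne: "R \<noteq> {}" and Rproper: "R \<noteq> UNIV"
    and klo: "klow f R \<le> k" and kup: "k \<le> kupp f R - 2"
    and xM: "x \<in> Mset f R k"
    and iR: "i \<in> R" and jR: "j \<notin> R"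
    and minij: "\<forall>h\<in>R. \<forall>l\<in>-R. dirder f x i j \<le> dirder f x h l"
    and eq: "dirder f (x + unitv i - unitv j) i j = dirder f x i j"
  shows "(\<forall>h\<in>R. \<forall>l\<in>-R. dirder f (x + unitv i - unitv j) i j
                          \<le> dirder f (x + unitv i - unitv j) h l)
         \<and> x + 2 * unitv i - 2 * unitv j \<in> Mset f R (k + 2)"
proof -
  define y where "y = x + unitv i - unitv j"
  define w where "w = x + 2 * unitv i - 2 * unitv j"
  have w_y: "w = y + unitv i - unitv j"
    unfolding w_def y_def by (rule ext) simp
  have "finite (effdom f)"
    using bdd finite_effdom_if_bounded by blast
  moreover have "effdom f \<noteq> {}"
    using Mconv by (simp add: M_convex_def)
  ultimately have "kupp f R \<in> (\<lambda>v. sum v R) ` effdom f"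
    unfolding kupp_def by simp
  then have "\<exists>v\<in>effdom f. k < sum v R"
    using kup by force
  then have yM: "y \<in> Mset f R (k + 1)"
    unfolding y_def using Mset_succ_if_best_neighbour[OF Mconv noninf xM iR jR minij] by blast
  have fin: "\<bar>f x\<bar> \<noteq> \<infinity>" "\<bar>f y\<bar> \<noteq> \<infinity>"
    using xM yM noninf by (auto simp: Mset_iff)
  have incr: "f w - f y = f y - f x"
    using eq unfolding dirder_def y_def[symmetric] w_y[symmetric] .
  have w_min: "f w \<le> f u" if "sum u R = k + 2" for u
    using Mset_midpoint_le[OF Mconv noninf xM yM that] ereal_le_if_equal_increments[OF fin incr]
    by blast
  have "f w < \<infinity>"
    using incr fin by (cases "f w") auto
  moreover have "sum w R = k + 2"
    using yM iR jR unfolding w_y by (subst sum_add_unitv_diff_unitv) (simp add: Mset_iff)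
  ultimately have wM: "w \<in> Mset f R (k + 2)"
    using w_min by (simp add: Mset_iff)
  have "dirder f y i j \<le> dirder f y h l" if "h \<in> R" "l \<in> -R" for h l
  proof -
    have "sum (y + unitv h - unitv l) R = k + 2"
      using yM that by (subst sum_add_unitv_diff_unitv) (simp add: Mset_iff)
    then show ?thesis
      using w_min fin(2) by (simp add: dirder_def w_y ereal_diff_right_le_iff)
  qed
  with wM show ?thesis
    unfolding y_def w_def by blast
qed

end
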